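(* Assume the setting and Assumption $( * )$ described in the context. Let $T\in(t_0,\infty)$ and let $(y,w)$ be a solution of the integrated Maxey–Riley system on $[t_0,T)$. Then: (i) there exists a constant $C>0$ such that for all $t_1,t_2$ with $t_0<t_1<t_2<T$, $\left|\int_{t_0}^{t_2}\frac{w(s)}{\sqrt{t_2-s}}\,ds-\int_{t_0}^{t_1}\frac{w(s)}{\sqrt{t_1-s}}\,ds\right|\le C|t_2-t_1|^{1/2}$; (ii) if $w(t_0)=0$, then the limit $\lim_{t\to t_0^+}\frac{w(t)}{\sqrt{t-t_0}}$ exists and equals $0$.
   Context: Fix $n\ge 1$, a domain $\mathscr{D}\subseteq\mathbb{R}^n$, an initial time $t_0\ge 0$, a velocity field $u:\mathscr{D}\times[0,\infty)\to\mathbb{R}^n$, real constants $R,\mu,\kappa,\gamma>0$ and a constant vector $g\in\mathbb{R}^n$. Write $\frac{D}{Dt}=\partial_t+(u\cdot\nabla)$ and define $A_u,B_u:\mathscr{D}\times[t_0,\infty)\to\mathbb{R}^n$, $M_u:\mathscr{D}\times[t_0,\infty)\to\mathbb{R}^{n\times n}$ by $A_u=u+\frac{\gamma}{6}\mu^{-1}\Delta u$, $M_u=\nabla u+\frac{\gamma}{6}\mu^{-1}\nabla\Delta u$, $B_u=\left(\frac{3R}{2}-1\right)\left(\frac{Du}{Dt}-g\right)+\left(\frac{R}{20}-\frac16\right)\gamma\mu^{-1}\frac{D}{Dt}\Delta u-\frac{\gamma}{6}\mu^{-1}\left(\nabla u+\frac{\gamma}{6}\mu^{-1}\nabla\Delta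 u\right)\Delta u$. The integrated Maxey–Riley system is $y(t)=y_0+\int_{t_0}^t\big(w(s)+A_u(y(s),s)\big)\,ds$, $w(t)=w_0+\int_{t_0}^t\Big(-\mu w(s)-M_u(y(s),s)w(s)-\kappa\mu^{1/2}\frac{w(s)}{\sqrt{t-s}}+B_u(y(s),s)\Big)\,ds$. A solution on $[t_0,T)$ with initial condition $(y_0,w_0)$ is a pair of continuous maps $y:[t_0,T)\to\mathscr{D}$, $w:[t_0,T)\to\mathbb{R}^n$ satisfying both equations for every $t\in[t_0,T)$. Assumption $( * )$: $u$ is smooth enough that the first-order partial derivatives in time and space of $A_u$ and $B_u$ exist, are continuous, and are uniformly bounded in time and space, i.e. there is $L_b$ with $\|\partial_tA_u\|_\infty,\|\nabla A_u\|_\infty,\|\partial_tB_u\|_\infty,\|\nabla B_u\|_\infty<L_b$. *)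

theory Defs
  imports "HOL-Analysis.Analysis"
begin

definition pdx :: "(real^'n \<Rightarrow> real \<Rightarrow> 'b::real_normed_vector) \<Rightarrow> 'n \<Rightarrow> real^'n \<Rightarrow> real \<Rightarrow> 'b" where
  "pdx f i x t = vector_derivative (\<lambda>h. f (x + h *\<^sub>R axis i 1) t) (at 0)"

definition pdt :: "(real^'n \<Rightarrow> real \<Rightarrow> 'b::real_normed_vector) \<Rightarrow> real^'n \<Rightarrow> real \<Rightarrow> 'b" where
  "pdt f x t = vector_derivative (\<lambda>s. f x s) (at t within {0..})"

definition lap :: "(real^'n \<Rightarrow> real \<Rightarrow> real^'n) \<Rightarrow> real^'n \<Rightarrow> real \<Rightarrow> real^'n" where
  "lap f x t = (\<Sum>i\<in>UNIV. pdx (pdx f i) i x t)"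

text \<open>Gradient of a vector field as the Jacobian matrix: (grad f)_{ij} = d_j f_i,
  so that (grad f) v = (v . nabla) f.\<close>
definition jac :: "(real^'n \<Rightarrow> real \<Rightarrow> real^'n) \<Rightarrow> real^'n \<Rightarrow> real \<Rightarrow> real^'n^'n" where
  "jac f x t = (\<chi> i j. pdx f j x t $ i)"

definition matd :: "(real^'n \<Rightarrow> real \<Rightarrow> real^'n) \<Rightarrow> (real^'n \<Rightarrow> real \<Rightarrow> real^'n) \<Rightarrow> real^'n \<Rightarrow> real \<Rightarrow> real^'n" where
  "matd u f x t = pdt f x t + (\<Sum>j\<in>UNIV. (u x t $ j) *\<^sub>R pdx f j x t)"

definition A_u :: "real \<Rightarrow> real \<Rightarrow> (real^'n \<Rightarrow> real \<Rightarrow> real^'n) \<Rightarrow> real^'n \<Rightarrow> real \<Rightarrow> real^'n" where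
  "A_u \<mu> \<gamma> u x t = u x t + (\<gamma> / 6 / \<mu>) *\<^sub>R lap u x t"

definition M_u :: "real \<Rightarrow> real \<Rightarrow> (real^'n \<Rightarrow> real \<Rightarrow> real^'n) \<Rightarrow> real^'n \<Rightarrow> real \<Rightarrow> real^'n^'n" where
  "M_u \<mu> \<gamma> u x t = jac u x t + (\<gamma> / 6 / \<mu>) *\<^sub>R jac (lap u) x t"

definition B_u :: "real \<Rightarrow> real \<Rightarrow> real \<Rightarrow> real^'n \<Rightarrow> (real^'n \<Rightarrow> real \<Rightarrow> real^'n) \<Rightarrow> real^'n \<Rightarrow> real \<Rightarrow> real^'n" where
  "B_u R \<mu> \<gamma> g u x t =
     (3 * R / 2 - 1) *\<^sub>R (matd u u x t - g)
     + ((R / 20 - 1 / 6) * \<gamma> / \<mu>) *\<^sub>R matd u (lap u) x t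
     - (\<gamma> / 6 / \<mu>) *\<^sub>R (M_u \<mu> \<gamma> u x t *v lap u x t)"

definition C1_bounded :: "(real^'n) set \<Rightarrow> real \<Rightarrow> real \<Rightarrow> (real^'n \<Rightarrow> real \<Rightarrow> real^'n) \<Rightarrow> bool" where
  "C1_bounded D t0 Lb F \<longleftrightarrow>
     (\<exists>DF :: 'n \<Rightarrow> real^'n \<Rightarrow> real \<Rightarrow> real^'n. \<exists>DFt :: real^'n \<Rightarrow> real \<Rightarrow> real^'n.
        (\<forall>x\<in>D. \<forall>t\<ge>t0.
           (\<forall>i. ((\<lambda>h. F (x + h *\<^sub>R axis i 1) t) has_vector_derivative DF i x t) (at 0))
           \<and> ((\<lambda>s. F x s) has_vector_derivative DFt x t) (at t within {t0..})
           \<and> (\<forall>i. norm (DF i x t) < Lb) \<and> norm (DFt x t) < Lb)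
        \<and> (\<forall>i. continuous_on (D \<times> {t0..}) (\<lambda>p. DF i (fst p) (snd p)))
        \<and> continuous_on (D \<times> {t0..}) (\<lambda>p. DFt (fst p) (snd p)))"

end

theory Submission
  imports Defs
begin

(* Everything rests on the Abel kernel 1/sqrt(t - s).  It integrates to
   2 sqrt(t - a) - 2 sqrt(t - b) over [a, b], and the kernels at two times t1 < t2 differ by a
   function whose integral over [t0, t1] is at most 2 sqrt(t2 - t1).  Hence (i) holds as soon as
   w is bounded on [t0, T).

   Boundedness is an a priori estimate.  The C1 bounds make A_u and B_u Lipschitz along the
   trajectory, so |A_u(y t, t)| and |B_u(y t, t)| grow at most by the integral of |y'| = |w + A_u|,
   while the Volterra equation for w bounds |w t| by integrals of the same quantities against the
   kernel.  For z = |w| + |A_u| + |B_u| and t0 <= tau <= t this gives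
     z t <= C + P sup z on [t0, tau] + (a (t - tau) + b sqrt (t - tau)) sup z on [t0, t].
   On a step t - tau so short that the last factor is at most 1/2, the supremum of z at most
   doubles up to a constant, and finitely many such steps cover [t0, T).

   For (ii), w t0 = 0 forces w0 = 0, so w t is the integral of the right-hand side, which is
   bounded by c (t - t0) + 2 k (sup of |w| on [t0, t]) sqrt (t - t0); continuity of w at t0 makes
   its quotient by sqrt (t - t0) small. *)

section \<open>Calculus on the real line\<close>

lemma norm_diff_le_of_vector_derivative_bound:
  fixes \<phi> :: "real \<Rightarrow> 'a::real_normed_vector"
  assumes "convex S" "a \<in> S" "b \<in> S"
    and "\<And>x. x \<in> S \<Longrightarrow> (\<phi> has_vector_derivative \<phi>' x) (at x within S)"
    and "\<And>x. x \<in> S \<Longrightarrow> norm (\<phi>' x) \<le> L"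
  shows "norm (\<phi> b - \<phi> a) \<le> L * \<bar>b - a\<bar>"
proof -
  have "norm (\<phi> b - \<phi> a) \<le> L * norm (b - a)"
  proof (rule differentiable_bound[of S \<phi> "\<lambda>x h. h *\<^sub>R \<phi>' x" L b a])
    show "onorm (\<lambda>h. h *\<^sub>R \<phi>' x) \<le> L" if "x \<in> S" for x
      using assms(5)[OF that] onorm_scaleR_left[OF bounded_linear_ident, of "\<phi>' x"]
      by (simp add: onorm_id)
  qed (use assms in \<open>auto simp: has_vector_derivative_def\<close>)
  then show ?thesis by simp
qed

lemma norm_diff_le_of_local_increment_bound:
  fixes \<phi> :: "real \<Rightarrow> 'a::real_normed_vector" and G :: "real \<Rightarrow> real"
  assumes "a \<le> b" "continuous_on {a..b} \<phi>" "continuous_on {a..b} G"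
    and local: "\<And>s. s \<in> {a..<b} \<Longrightarrow>
      \<exists>\<delta>>0. \<forall>s'\<in>{s..b}. s' - s < \<delta> \<longrightarrow> norm (\<phi> s' - \<phi> s) \<le> G s' - G s"
  shows "norm (\<phi> b - \<phi> a) \<le> G b - G a"
proof -
  define S where "S = {s \<in> {a..b}. norm (\<phi> s - \<phi> a) \<le> G s - G a}"
  have "closed S"
    unfolding S_def using assms(2,3) by (intro continuous_on_closed_Collect_le continuous_intros)
  moreover have "a \<in> S" "bdd_above S"
    using \<open>a \<le> b\<close> by (auto simp: S_def bdd_above_def)
  ultimately have sup_S: "Sup S \<in> S"
    using closed_contains_Sup by blast
  have "Sup S = b"
  proof (rule ccontr)
    assume "Sup S \<noteq> b"
    with sup_S have c: "Sup S \<in> {a..<b}" by (auto simp: S_def)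
    then obtain \<delta> where "\<delta> > 0"
      and \<delta>: "\<forall>s'\<in>{Sup S..b}. s' - Sup S < \<delta> \<longrightarrow> norm (\<phi> s' - \<phi> (Sup S)) \<le> G s' - G (Sup S)"
      using local by blast
    define s' where "s' = min b (Sup S + \<delta> / 2)"
    have s': "s' \<in> {Sup S..b}" "s' - Sup S < \<delta>" "Sup S < s'"
      using c \<open>\<delta> > 0\<close> by (auto simp: s'_def)
    have "norm (\<phi> s' - \<phi> a) \<le> norm (\<phi> s' - \<phi> (Sup S)) + norm (\<phi> (Sup S) - \<phi> a)"
      by (rule order_trans[OF _ norm_triangle_ineq]) simp
    also have "\<dots> \<le> (G s' - G (Sup S)) + (G (Sup S) - G a)"
      using \<delta> s' sup_S by (intro add_mono) (auto simp: S_def)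
    finally have "s' \<in> S" using s' c by (auto simp: S_def)
    then have "s' \<le> Sup S" using \<open>bdd_above S\<close> by (rule cSup_upper)
    with s' show False by simp
  qed
  with sup_S show ?thesis by (simp add: S_def)
qed

lemma has_integral_increment:
  fixes v :: "real \<Rightarrow> 'a::banach"
  assumes curve: "\<And>t. t \<in> {a..b} \<Longrightarrow> (v has_integral y t - y a) {a..t}"
    and "a \<le> s" "s \<le> s'" "s' \<le> b"
  shows "(v has_integral y s' - y s) {s..s'}"
proof -
  have to_s: "(v has_integral y s - y a) {a..s}"
    using assms(2-4) by (intro curve) simp
  have to_s': "(v has_integral y s' - y a) {a..s'}"
    using assms(2-4) by (intro curve) simp
  have "v integrable_on {s..s'}"
    by (rule integrable_on_subinterval[OF has_integral_integrable[OF to_s']]) (use assms(2) in auto)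
  then obtain J where J: "(v has_integral J) {s..s'}" by blast
  have "(v has_integral (y s - y a) + J) {a..s'}"
    using assms(2,3) to_s J by (rule has_integral_combine)
  then have "(y s - y a) + J = y s' - y a"
    using to_s' by (rule has_integral_unique)
  then have "J = y s' - y s" by (simp add: algebra_simps)
  with J show ?thesis by simp
qed

lemma norm_increment_le_integral_norm:
  fixes v :: "real \<Rightarrow> 'a::euclidean_space"
  assumes curve: "\<And>t. t \<in> {a..b} \<Longrightarrow> (v has_integral y t - y a) {a..t}"
    and "continuous_on {a..b} v" "a \<le> s" "s \<le> s'" "s' \<le> b"
  shows "norm (y s' - y s) \<le> integral {s..s'} (\<lambda>s. norm (v s))"
proof -
  have increment: "(v has_integral y s' - y s) {s..s'}"
    by (rule has_integral_increment[of a b v y s s', OF curve assms(3-5)])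
  have "continuous_on {s..s'} v"
    by (rule continuous_on_subset[OF assms(2)]) (use assms(3-5) in auto)
  then have "(\<lambda>s. norm (v s)) integrable_on {s..s'}"
    by (intro integrable_continuous_interval continuous_intros)
  then have "norm (integral {s..s'} v) \<le> integral {s..s'} (\<lambda>s. norm (v s))"
    by (intro integral_norm_bound_integral has_integral_integrable[OF increment]) auto
  then show ?thesis by (simp add: integral_unique[OF increment])
qed

lemma has_integral_inverse_sqrt:
  assumes "a \<le> b" "b \<le> e"
  shows "((\<lambda>s. 1 / sqrt (e - s)) has_integral 2 * sqrt (e - a) - 2 * sqrt (e - b)) {a..b}"
proof -
  have "((\<lambda>s. 1 / sqrt (e - s)) has_integral (- 2 * sqrt (e - b)) - (- 2 * sqrt (e - a))) {a..b}"
  proof (rule fundamental_theorem_of_calculus_interior[OF \<open>a \<le> b\<close>])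
    show "continuous_on {a..b} (\<lambda>s. - 2 * sqrt (e - s))"
      by (intro continuous_intros)
    fix x assume "x \<in> {a<..<b}"
    then have "e - x > 0" using assms by auto
    then have "((\<lambda>s. - 2 * sqrt (e - s)) has_real_derivative 1 / sqrt (e - x)) (at x)"
      by (auto intro!: derivative_eq_intros simp: divide_simps)
    then show "((\<lambda>s. - 2 * sqrt (e - s)) has_vector_derivative 1 / sqrt (e - x)) (at x)"
      by (simp add: has_real_derivative_iff_has_vector_derivative)
  qed
  then show ?thesis by simp
qed

lemma norm_integral_le_weakly_singular:
  fixes f :: "real \<Rightarrow> 'a::euclidean_space"
  assumes f: "f integrable_on {a..b}" and "a \<le> b" "b \<le> e" "0 \<le> m" "0 \<le> k"
    and bound: "\<And>s. s \<in> {a..b} \<Longrightarrow> norm (f s) \<le> m * (\<alpha> + k / sqrt (e - s))"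
  shows "norm (integral {a..b} f) \<le> m * (\<alpha> * (b - a) + 2 * k * sqrt (e - a))"
proof -
  have "((\<lambda>s. m * (\<alpha> + k * (1 / sqrt (e - s)))) has_integral
      m * (\<alpha> * (b - a) + k * (2 * sqrt (e - a) - 2 * sqrt (e - b)))) {a..b}"
    using assms(2,3) has_integral_const_real[of \<alpha> a b]
    by (intro has_integral_mult_right has_integral_add has_integral_inverse_sqrt)
      (auto simp: mult.commute)
  then have majorant: "((\<lambda>s. m * (\<alpha> + k / sqrt (e - s))) has_integral
      m * (\<alpha> * (b - a) + k * (2 * sqrt (e - a) - 2 * sqrt (e - b)))) {a..b}"
    by simp
  have "norm (integral {a..b} f) \<le> integral {a..b} (\<lambda>s. m * (\<alpha> + k / sqrt (e - s)))"
    using majorant by (intro integral_norm_bound_integral[OF f _ bound]) blast+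
  also have "\<dots> = m * (\<alpha> * (b - a) + k * (2 * sqrt (e - a) - 2 * sqrt (e - b)))"
    using majorant by (rule integral_unique)
  also have "\<dots> \<le> m * (\<alpha> * (b - a) + 2 * k * sqrt (e - a))"
    using assms(3-5) by (intro mult_left_mono) (auto simp: algebra_simps)
  finally show ?thesis .
qed

lemma norm_integral_le_weakly_singular_split:
  fixes f :: "real \<Rightarrow> 'a::euclidean_space"
  assumes f: "f integrable_on {a..t}" and "a \<le> \<tau>" "\<tau> \<le> t" "0 \<le> m1" "0 \<le> m2" "0 \<le> k"
    and head: "\<And>s. s \<in> {a..\<tau>} \<Longrightarrow> norm (f s) \<le> m1 * (\<alpha> + k / sqrt (t - s))"
    and tail: "\<And>s. s \<in> {\<tau>..t} \<Longrightarrow> norm (f s) \<le> m2 * (\<alpha> + k / sqrt (t - s))"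
  shows "norm (integral {a..t} f)
    \<le> m1 * (\<alpha> * (\<tau> - a) + 2 * k * sqrt (t - a)) + m2 * (\<alpha> * (t - \<tau>) + 2 * k * sqrt (t - \<tau>))"
proof -
  have "f integrable_on {a..\<tau>}" "f integrable_on {\<tau>..t}"
    using assms(2,3) by (auto intro: integrable_on_subinterval[OF f])
  then have "norm (integral {a..\<tau>} f) \<le> m1 * (\<alpha> * (\<tau> - a) + 2 * k * sqrt (t - a))"
    and "norm (integral {\<tau>..t} f) \<le> m2 * (\<alpha> * (t - \<tau>) + 2 * k * sqrt (t - \<tau>))"
    using assms(2-6) by (auto intro!: norm_integral_le_weakly_singular head tail)
  moreover have "integral {a..t} f = integral {a..\<tau>} f + integral {\<tau>..t} f"
    using assms(2,3) by (intro Henstock_Kurzweil_Integration.integral_combine[symmetric] f)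
  ultimately show ?thesis
    by (metis add_mono norm_triangle_le)
qed

lemma integrable_inverse_sqrt_scaleR:
  fixes w :: "real \<Rightarrow> 'a::euclidean_space"
  assumes "continuous_on {a..b} w" "a \<le> b" "b \<le> e"
  shows "(\<lambda>s. (1 / sqrt (e - s)) *\<^sub>R w s) integrable_on {a..b}"
proof -
  have bil: "bilinear (\<lambda>(v::'a) (r::real). r *\<^sub>R v)"
    unfolding bilinear_conv_bounded_bilinear by (rule bounded_bilinear.flip[OF bounded_bilinear_scaleR])
  have meas: "w \<in> borel_measurable (lebesgue_on {a..b})"
    using assms(1) by (rule continuous_imp_measurable_on_sets_lebesgue) auto
  have bdd: "bounded (w ` {a..b})"
    using assms(1) by (intro compact_imp_bounded compact_continuous_image) auto
  have kernel: "(\<lambda>s. 1 / sqrt (e - s)) absolutely_integrable_on {a..b}"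
    using has_integral_inverse_sqrt[OF assms(2,3)] assms(3)
    by (intro nonnegative_absolutely_integrable_1) auto
  have "(\<lambda>s. (1 / sqrt (e - s)) *\<^sub>R w s) absolutely_integrable_on {a..b}"
    using absolutely_integrable_bounded_measurable_product[OF bil meas _ bdd kernel] by simp
  then show ?thesis using set_lebesgue_integral_eq_integral(1) by blast
qed

lemma has_integral_inverse_sqrt_kernel_diff:
  assumes "a \<le> t1" "t1 \<le> t2"
  shows "((\<lambda>s. \<bar>1 / sqrt (t1 - s) - 1 / sqrt (t2 - s)\<bar>) has_integral
    2 * sqrt (t1 - a) + 2 * sqrt (t2 - t1) - 2 * sqrt (t2 - a)) {a..t1}"
proof -
  have "((\<lambda>s. 1 / sqrt (t1 - s) - 1 / sqrt (t2 - s)) has_integral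
      (2 * sqrt (t1 - a) - 2 * sqrt (t1 - t1)) - (2 * sqrt (t2 - a) - 2 * sqrt (t2 - t1))) {a..t1}"
    using assms by (intro has_integral_diff has_integral_inverse_sqrt) auto
  then have "((\<lambda>s. 1 / sqrt (t1 - s) - 1 / sqrt (t2 - s)) has_integral
      2 * sqrt (t1 - a) + 2 * sqrt (t2 - t1) - 2 * sqrt (t2 - a)) {a..t1}"
    by (simp add: diff_diff_eq2)
  then show ?thesis
  proof (rule has_integral_spike[OF negligible_sing[of t1], rotated])
    fix s assume "s \<in> {a..t1} - {t1}"
    then have "1 / sqrt (t2 - s) \<le> 1 / sqrt (t1 - s)"
      using assms by (intro divide_left_mono) auto
    then show "\<bar>1 / sqrt (t1 - s) - 1 / sqrt (t2 - s)\<bar> = 1 / sqrt (t1 - s) - 1 / sqrt (t2 - s)"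
      by simp
  qed
qed

lemma norm_integral_inverse_sqrt_kernel_diff_le:
  fixes w :: "real \<Rightarrow> 'a::euclidean_space"
  assumes cont: "continuous_on {a..t1} w" and bound: "\<And>s. s \<in> {a..t1} \<Longrightarrow> norm (w s) \<le> Z"
    and "a \<le> t1" "t1 \<le> t2"
  shows "norm (integral {a..t1} (\<lambda>s. (1 / sqrt (t2 - s)) *\<^sub>R w s)
              - integral {a..t1} (\<lambda>s. (1 / sqrt (t1 - s)) *\<^sub>R w s)) \<le> 2 * Z * sqrt (t2 - t1)"
proof -
  have kernel: "((\<lambda>s. Z * \<bar>1 / sqrt (t1 - s) - 1 / sqrt (t2 - s)\<bar>) has_integral
      Z * (2 * sqrt (t1 - a) + 2 * sqrt (t2 - t1) - 2 * sqrt (t2 - a))) {a..t1}"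
    using assms(3,4) by (intro has_integral_mult_right has_integral_inverse_sqrt_kernel_diff)
  have integrable: "(\<lambda>s. (1 / sqrt (e - s)) *\<^sub>R w s) integrable_on {a..t1}" if "t1 \<le> e" for e
    using cont assms(3) that by (rule integrable_inverse_sqrt_scaleR)
  have "norm (integral {a..t1} (\<lambda>s. (1 / sqrt (t2 - s)) *\<^sub>R w s)
      - integral {a..t1} (\<lambda>s. (1 / sqrt (t1 - s)) *\<^sub>R w s))
      = norm (integral {a..t1} (\<lambda>s. (1 / sqrt (t2 - s) - 1 / sqrt (t1 - s)) *\<^sub>R w s))"
    using integrable[of t1] integrable[of t2] assms(4) by (simp add: integral_diff scaleR_diff_left)
  also have "\<dots> \<le> integral {a..t1} (\<lambda>s. Z * \<bar>1 / sqrt (t1 - s) - 1 / sqrt (t2 - s)\<bar>)"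
  proof (rule integral_norm_bound_integral)
    show "(\<lambda>s. (1 / sqrt (t2 - s) - 1 / sqrt (t1 - s)) *\<^sub>R w s) integrable_on {a..t1}"
      using integrable_diff[OF integrable[of t2] integrable[of t1]] assms(4) by (simp add: scaleR_diff_left)
    show "(\<lambda>s. Z * \<bar>1 / sqrt (t1 - s) - 1 / sqrt (t2 - s)\<bar>) integrable_on {a..t1}"
      using kernel by blast
    fix s assume "s \<in> {a..t1}"
    then have "\<bar>1 / sqrt (t2 - s) - 1 / sqrt (t1 - s)\<bar> * norm (w s)
        \<le> \<bar>1 / sqrt (t2 - s) - 1 / sqrt (t1 - s)\<bar> * Z"
      by (intro mult_left_mono bound) auto
    then show "norm ((1 / sqrt (t2 - s) - 1 / sqrt (t1 - s)) *\<^sub>R w s)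
        \<le> Z * \<bar>1 / sqrt (t1 - s) - 1 / sqrt (t2 - s)\<bar>"
      by (simp add: abs_minus_commute mult.commute)
  qed
  also have "\<dots> = Z * (2 * sqrt (t1 - a) + 2 * sqrt (t2 - t1) - 2 * sqrt (t2 - a))"
    using kernel by (rule integral_unique)
  also have "\<dots> \<le> 2 * Z * sqrt (t2 - t1)"
  proof -
    have "norm (w a) \<le> Z" using assms by (intro bound) auto
    then have "Z * sqrt (t1 - a) \<le> Z * sqrt (t2 - a)"
      using assms by (intro mult_left_mono) (auto intro: order_trans[OF norm_ge_zero])
    then show ?thesis by (simp add: algebra_simps)
  qed
  finally show ?thesis .
qed

lemma inverse_sqrt_kernel_integral_Hoelder:
  fixes w :: "real \<Rightarrow> 'a::euclidean_space"
  assumes cont: "continuous_on {a..t2} w" and bound: "\<And>s. s \<in> {a..t2} \<Longrightarrow> norm (w s) \<le> Z"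
    and "a \<le> t1" "t1 \<le> t2"
  shows "norm (integral {a..t2} (\<lambda>s. (1 / sqrt (t2 - s)) *\<^sub>R w s)
              - integral {a..t1} (\<lambda>s. (1 / sqrt (t1 - s)) *\<^sub>R w s)) \<le> 4 * Z * sqrt (t2 - t1)"
proof -
  define F where "F e s = (1 / sqrt (e - s)) *\<^sub>R w s" for e s
  have "norm (w a) \<le> Z" using assms by (intro bound) auto
  then have "Z \<ge> 0" by (rule order_trans[OF norm_ge_zero])
  have F: "F t2 integrable_on {a..t2}"
    unfolding F_def using assms by (intro integrable_inverse_sqrt_scaleR) auto
  have "norm (F t2 s) \<le> Z * (0 + 1 / sqrt (t2 - s))" if "s \<in> {t1..t2}" for s
    using bound[of s] that assms by (simp add: F_def divide_right_mono)
  then have tail: "norm (integral {t1..t2} (F t2)) \<le> Z * (0 * (t2 - t1) + 2 * 1 * sqrt (t2 - t1))"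
    using assms \<open>Z \<ge> 0\<close> by (intro norm_integral_le_weakly_singular integrable_on_subinterval[OF F]) auto
  have head: "norm (integral {a..t1} (F t2) - integral {a..t1} (F t1)) \<le> 2 * Z * sqrt (t2 - t1)"
    unfolding F_def using assms
    by (intro norm_integral_inverse_sqrt_kernel_diff_le continuous_on_subset[OF cont] bound) auto
  have "integral {a..t2} (F t2) - integral {a..t1} (F t1)
      = (integral {a..t1} (F t2) - integral {a..t1} (F t1)) + integral {t1..t2} (F t2)"
    using assms by (simp add: Henstock_Kurzweil_Integration.integral_combine[symmetric, OF _ _ F])
  then have "norm (integral {a..t2} (F t2) - integral {a..t1} (F t1))
      \<le> norm (integral {a..t1} (F t2) - integral {a..t1} (F t1)) + norm (integral {t1..t2} (F t2))"
    by (metis norm_triangle_ineq)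
  then show ?thesis
    using head tail unfolding F_def by simp
qed

lemma norm_Volterra_solution_le:
  fixes w :: "real \<Rightarrow> 'a::euclidean_space"
  assumes integral_eq: "(f has_integral w t) {t0..t}" and "t0 \<le> t" "0 \<le> \<alpha>" "0 \<le> k"
    and bound: "\<And>s. s \<in> {t0..t} \<Longrightarrow> norm (f s) \<le> \<beta> + (\<alpha> + k / sqrt (t - s)) * norm (w s)"
    and small: "\<And>s. s \<in> {t0..t} \<Longrightarrow> norm (w s) \<le> \<eta>"
  shows "norm (w t) \<le> (\<beta> + \<alpha> * \<eta>) * (t - t0) + 2 * k * \<eta> * sqrt (t - t0)"
proof -
  have "0 \<le> \<eta>" using small[of t0] \<open>t0 \<le> t\<close> by (auto intro: order_trans[OF norm_ge_zero])
  have "norm (f s) \<le> 1 * (\<beta> + \<alpha> * \<eta> + k * \<eta> / sqrt (t - s))" if s: "s \<in> {t0..t}" for s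
  proof -
    have "(\<alpha> + k / sqrt (t - s)) * norm (w s) \<le> (\<alpha> + k / sqrt (t - s)) * \<eta>"
      using small[OF s] s \<open>0 \<le> \<alpha>\<close> \<open>0 \<le> k\<close> by (intro mult_left_mono) auto
    then show ?thesis using bound[OF s] by (simp add: algebra_simps)
  qed
  then have "norm (integral {t0..t} f) \<le> 1 * ((\<beta> + \<alpha> * \<eta>) * (t - t0) + 2 * (k * \<eta>) * sqrt (t - t0))"
    using integral_eq \<open>t0 \<le> t\<close> \<open>0 \<le> k\<close> \<open>0 \<le> \<eta>\<close>
    by (intro norm_integral_le_weakly_singular) auto
  then show ?thesis using integral_unique[OF integral_eq] by (simp add: mult.assoc)
qed

lemma Volterra_solution_over_sqrt_tendsto_0:
  fixes w :: "real \<Rightarrow> 'a::euclidean_space"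
  assumes cont: "continuous_on {t0..<T} w" and "t0 < T" "w t0 = 0" "0 \<le> \<alpha>" "0 \<le> k"
    and integral_eq: "\<And>t. t \<in> {t0..<T} \<Longrightarrow> (f t has_integral w t) {t0..t}"
    and bound: "\<And>t s. t \<in> {t0..<T} \<Longrightarrow> s \<in> {t0..t} \<Longrightarrow>
      norm (f t s) \<le> \<beta> + (\<alpha> + k / sqrt (t - s)) * norm (w s)"
  shows "((\<lambda>t. (1 / sqrt (t - t0)) *\<^sub>R w t) \<longlongrightarrow> 0) (at_right t0)"
proof (rule tendstoI)
  fix e :: real assume "e > 0"
  define \<eta> where "\<eta> = e / (4 * (k + 1))"
  have "\<eta> > 0" using \<open>e > 0\<close> \<open>0 \<le> k\<close> by (simp add: \<eta>_def)
  have "2 * k * \<eta> = e / 2 * (k / (k + 1))"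
    using \<open>0 \<le> k\<close> by (simp add: \<eta>_def field_simps)
  also have "\<dots> \<le> e / 2"
    using \<open>0 \<le> k\<close> \<open>e > 0\<close> by (intro mult_left_le) auto
  finally have memory: "2 * k * \<eta> \<le> e / 2" .
  have "t0 \<in> {t0..<T}" using \<open>t0 < T\<close> by simp
  then obtain \<delta> where "\<delta> > 0" and \<delta>: "\<And>s. s \<in> {t0..<T} \<Longrightarrow> dist s t0 < \<delta> \<Longrightarrow> norm (w s) < \<eta>"
    using cont \<open>\<eta> > 0\<close> \<open>w t0 = 0\<close> unfolding continuous_on_iff by (metis dist_0_norm dist_commute)
  have "((\<lambda>t. (\<beta> + \<alpha> * \<eta>) * sqrt (t - t0)) \<longlongrightarrow> (\<beta> + \<alpha> * \<eta>) * sqrt (t0 - t0)) (at_right t0)"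
    by (intro tendsto_intros)
  then have "eventually (\<lambda>t. (\<beta> + \<alpha> * \<eta>) * sqrt (t - t0) < e/2) (at_right t0)"
    using \<open>e > 0\<close> by (intro order_tendstoD(2)) auto
  moreover have "eventually (\<lambda>t. t0 < t \<and> t < t0 + min \<delta> (T - t0)) (at_right t0)"
    using \<open>\<delta> > 0\<close> \<open>t0 < T\<close> by (auto simp: eventually_at_right_field intro: exI[of _ "t0 + min \<delta> (T - t0)"])
  ultimately show "eventually (\<lambda>t. dist ((1 / sqrt (t - t0)) *\<^sub>R w t) 0 < e) (at_right t0)"
  proof eventually_elim
    case (elim t)
    then have t: "t \<in> {t0..<T}" by auto
    have "norm (w t) \<le> (\<beta> + \<alpha> * \<eta>) * (t - t0) + 2 * k * \<eta> * sqrt (t - t0)"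
      using t elim \<open>0 \<le> \<alpha>\<close> \<open>0 \<le> k\<close>
      by (intro norm_Volterra_solution_le[where f = "f t" and w = w, OF integral_eq[OF t]]
          bound less_imp_le[OF \<delta>])
        (auto simp: dist_real_def)
    moreover have "t - t0 = sqrt (t - t0) * sqrt (t - t0)" using t by simp
    ultimately have "norm (w t) \<le> ((\<beta> + \<alpha> * \<eta>) * sqrt (t - t0) + 2 * k * \<eta>) * sqrt (t - t0)"
      by (simp add: algebra_simps)
    moreover have pos: "sqrt (t - t0) > 0" using elim by simp
    ultimately have "norm (w t) / sqrt (t - t0) \<le> (\<beta> + \<alpha> * \<eta>) * sqrt (t - t0) + 2 * k * \<eta>"
      by (simp add: pos_divide_le_eq)
    also have "\<dots> < e" using elim memory by linarith
    finally show ?case using pos by simp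
  qed
qed

lemma short_step_exists:
  fixes a b :: real
  obtains h where "h > 0" "\<And>d. 0 \<le> d \<Longrightarrow> d \<le> h \<Longrightarrow> a * d + b * sqrt d \<le> 1/2"
proof -
  have "((\<lambda>d. a * d + b * sqrt d) \<longlongrightarrow> a * 0 + b * sqrt 0) (at_right 0)"
    by (intro tendsto_intros)
  from order_tendstoD(2)[OF this, of "1/2"] obtain h where "h > 0"
    and h: "\<And>d. 0 < d \<Longrightarrow> d < h \<Longrightarrow> a * d + b * sqrt d < 1/2"
    unfolding eventually_at_right_field by auto
  show ?thesis
  proof (rule that[of "h/2"])
    show "a * d + b * sqrt d \<le> 1/2" if "0 \<le> d" "d \<le> h/2" for d
      using that \<open>h > 0\<close> h[of d] by (cases "d = 0") auto
  qed (use \<open>h > 0\<close> in simp)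
qed

lemma bootstrap_step:
  fixes z :: "real \<Rightarrow> real"
  assumes cont: "continuous_on {t0..<T} z" and nonneg: "\<And>s. s \<in> {t0..<T} \<Longrightarrow> 0 \<le> z s"
    and estimate: "\<And>t \<tau> m1 m2. t \<in> {t0..<T} \<Longrightarrow> \<tau> \<in> {t0..t} \<Longrightarrow> 0 \<le> m1 \<Longrightarrow> 0 \<le> m2 \<Longrightarrow>
       (\<forall>s\<in>{t0..\<tau>}. z s \<le> m1) \<Longrightarrow> (\<forall>s\<in>{t0..t}. z s \<le> m2) \<Longrightarrow>
       z t \<le> C + P * m1 + (a * (t - \<tau>) + b * sqrt (t - \<tau>)) * m2"
    and short: "\<And>d. 0 \<le> d \<Longrightarrow> d \<le> h \<Longrightarrow> a * d + b * sqrt d \<le> 1/2"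
    and "t0 \<le> \<tau>" "0 \<le> M" and below: "\<And>s. s \<in> {t0..<T} \<Longrightarrow> s \<le> \<tau> \<Longrightarrow> z s \<le> M"
    and t: "t \<in> {t0..<T}" "t \<le> \<tau> + h"
  shows "z t \<le> max M (2 * \<bar>C\<bar> + 2 * P * M)"
proof -
  have "continuous_on {t0..t} z"
    using t by (intro continuous_on_subset[OF cont]) auto
  then obtain s where s: "s \<in> {t0..t}" and max: "\<forall>r\<in>{t0..t}. z r \<le> z s"
    using continuous_attains_sup[of "{t0..t}" z] t by auto
  have sT: "s \<in> {t0..<T}" using s t by auto
  have "z s \<le> max M (2 * \<bar>C\<bar> + 2 * P * M)"
  proof (cases "s \<le> \<tau>")
    case True
    then show ?thesis using below[OF sT] by simp
  next
    case False
    then have \<tau>: "\<tau> \<in> {t0..s}" "s - \<tau> \<le> h"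
      using \<open>t0 \<le> \<tau>\<close> s t by auto
    have "\<forall>r\<in>{t0..\<tau>}. z r \<le> M"
      using below \<tau>(1) sT by auto
    moreover have "\<forall>r\<in>{t0..s}. z r \<le> z s"
      using max s by auto
    ultimately have "z s \<le> C + P * M + (a * (s - \<tau>) + b * sqrt (s - \<tau>)) * z s"
      by (rule estimate[OF sT \<tau>(1) \<open>0 \<le> M\<close> nonneg[OF sT]])
    also have "\<dots> \<le> C + P * M + 1/2 * z s"
      using short[of "s - \<tau>"] \<tau> nonneg[OF sT] by (intro add_left_mono mult_right_mono) auto
    finally show ?thesis by simp
  qed
  moreover have "z t \<le> z s" using max t by auto
  ultimately show ?thesis by linarith
qed

lemma bounded_of_short_step_bootstrap:
  fixes z :: "real \<Rightarrow> real"
  assumes cont: "continuous_on {t0..<T} z" and nonneg: "\<And>s. s \<in> {t0..<T} \<Longrightarrow> 0 \<le> z s"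
    and "0 \<le> P"
    and estimate: "\<And>t \<tau> m1 m2. t \<in> {t0..<T} \<Longrightarrow> \<tau> \<in> {t0..t} \<Longrightarrow> 0 \<le> m1 \<Longrightarrow> 0 \<le> m2 \<Longrightarrow>
       (\<forall>s\<in>{t0..\<tau>}. z s \<le> m1) \<Longrightarrow> (\<forall>s\<in>{t0..t}. z s \<le> m2) \<Longrightarrow>
       z t \<le> C + P * m1 + (a * (t - \<tau>) + b * sqrt (t - \<tau>)) * m2"
  obtains Z where "\<And>s. s \<in> {t0..<T} \<Longrightarrow> z s \<le> Z"
proof -
  obtain h where "h > 0" and short: "\<And>d. 0 \<le> d \<Longrightarrow> d \<le> h \<Longrightarrow> a * d + b * sqrt d \<le> 1/2"
    using short_step_exists by blast
  have bounded_up_to: "\<exists>M\<ge>0. \<forall>s\<in>{t0..<T}. s \<le> t0 + real k * h \<longrightarrow> z s \<le> M" for k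
  proof (induction k)
    case 0
    show ?case by (intro exI[of _ "\<bar>z t0\<bar>"]) auto
  next
    case (Suc k)
    then obtain M where "M \<ge> 0" and M: "\<forall>s\<in>{t0..<T}. s \<le> t0 + real k * h \<longrightarrow> z s \<le> M"
      by blast
    have "t0 \<le> t0 + real k * h" using \<open>h > 0\<close> by simp
    then have "z t \<le> max M (2 * \<bar>C\<bar> + 2 * P * M)"
      if "t \<in> {t0..<T}" "t \<le> t0 + real (Suc k) * h" for t
      using that M \<open>M \<ge> 0\<close>
      by (intro bootstrap_step[OF cont nonneg estimate short, where \<tau> = "t0 + real k * h"])
        (auto simp: algebra_simps)
    then show ?case using \<open>M \<ge> 0\<close> by (intro exI[of _ "max M (2 * \<bar>C\<bar> + 2 * P * M)"]) auto
  qed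
  obtain k :: nat where "(T - t0) / h \<le> real k"
    using real_arch_simple by blast
  then have "T \<le> t0 + real k * h"
    using \<open>h > 0\<close> by (simp add: field_simps)
  moreover obtain M where "\<forall>s\<in>{t0..<T}. s \<le> t0 + real k * h \<longrightarrow> z s \<le> M"
    using bounded_up_to by blast
  ultimately show ?thesis
    using that[of M] by auto
qed

section \<open>Consequences of the C1 bounds on A_u and B_u\<close>

lemma C1_bounded_time_derivativeE:
  assumes "C1_bounded D t0 Lb F"
  obtains DFt where
    "\<And>x t. x \<in> D \<Longrightarrow> t0 \<le> t \<Longrightarrow> ((\<lambda>s. F x s) has_vector_derivative DFt x t) (at t within {t0..})"
    "\<And>x t. x \<in> D \<Longrightarrow> t0 \<le> t \<Longrightarrow> norm (DFt x t) < Lb"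
proof -
  from assms obtain DFt where "\<forall>x\<in>D. \<forall>t\<ge>t0.
      ((\<lambda>s. F x s) has_vector_derivative DFt x t) (at t within {t0..}) \<and> norm (DFt x t) < Lb"
    unfolding C1_bounded_def by blast
  then show ?thesis by (intro that) auto
qed

lemma C1_bounded_space_derivativeE:
  assumes "C1_bounded D t0 Lb F"
  obtains DF where
    "\<And>x t i. x \<in> D \<Longrightarrow> t0 \<le> t \<Longrightarrow>
      ((\<lambda>h. F (x + h *\<^sub>R axis i 1) t) has_vector_derivative DF i x t) (at 0)"
    "\<And>x t i. x \<in> D \<Longrightarrow> t0 \<le> t \<Longrightarrow> norm (DF i x t) < Lb"
proof -
  from assms obtain DF where "\<forall>x\<in>D. \<forall>t\<ge>t0. \<forall>i.
      ((\<lambda>h. F (x + h *\<^sub>R axis i 1) t) has_vector_derivative DF i x t) (at 0) \<and> norm (DF i x t) < Lb"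
    unfolding C1_bounded_def by blast
  then show ?thesis by (intro that) auto
qed

lemma C1_bounded_pos:
  assumes "C1_bounded D t0 Lb F" "x \<in> D"
  shows "0 < Lb"
proof -
  obtain DFt :: "real^'a \<Rightarrow> real \<Rightarrow> real^'a" where
    "\<And>x t. x \<in> D \<Longrightarrow> t0 \<le> t \<Longrightarrow> ((\<lambda>s. F x s) has_vector_derivative DFt x t) (at t within {t0..})"
    "\<And>x t. x \<in> D \<Longrightarrow> t0 \<le> t \<Longrightarrow> norm (DFt x t) < Lb"
    using C1_bounded_time_derivativeE[OF assms(1)] by blast
  then have "norm (DFt x t0) < Lb" using assms(2) by blast
  then show ?thesis by (rule le_less_trans[OF norm_ge_zero])
qed

lemma C1_bounded_time_Lipschitz:
  assumes "C1_bounded D t0 Lb F" "x \<in> D" "t0 \<le> t" "t0 \<le> t'"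
  shows "norm (F x t' - F x t) \<le> Lb * \<bar>t' - t\<bar>"
proof -
  obtain DFt where DFt: "\<And>x s. x \<in> D \<Longrightarrow> t0 \<le> s \<Longrightarrow> ((\<lambda>s. F x s) has_vector_derivative DFt x s) (at s within {t0..})"
    and bound: "\<And>x s. x \<in> D \<Longrightarrow> t0 \<le> s \<Longrightarrow> norm (DFt x s) < Lb"
    using C1_bounded_time_derivativeE[OF assms(1)] by blast
  show ?thesis
  proof (rule norm_diff_le_of_vector_derivative_bound[of "{min t t'..max t t'}"])
    fix s assume s: "s \<in> {min t t'..max t t'}"
    then show "((\<lambda>s. F x s) has_vector_derivative DFt x s) (at s within {min t t'..max t t'})"
      using assms(2-4) by (intro has_vector_derivative_within_subset[OF DFt]) auto
    show "norm (DFt x s) \<le> Lb"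
      using s assms(2-4) by (auto intro: less_imp_le[OF bound])
  qed auto
qed

lemma C1_bounded_coordinate_Lipschitz:
  assumes "C1_bounded D t0 Lb F" "t0 \<le> t"
    and segment: "\<And>h. h \<in> closed_segment 0 d \<Longrightarrow> p + h *\<^sub>R axis j 1 \<in> D"
  shows "norm (F (p + d *\<^sub>R axis j 1) t - F p t) \<le> Lb * \<bar>d\<bar>"
proof -
  obtain DF where DF: "\<And>x t i. x \<in> D \<Longrightarrow> t0 \<le> t \<Longrightarrow>
      ((\<lambda>h. F (x + h *\<^sub>R axis i 1) t) has_vector_derivative DF i x t) (at 0)"
    and bound: "\<And>x t i. x \<in> D \<Longrightarrow> t0 \<le> t \<Longrightarrow> norm (DF i x t) < Lb"
    using C1_bounded_space_derivativeE[OF assms(1)] by blast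
  have "norm (F (p + d *\<^sub>R axis j 1) t - F (p + 0 *\<^sub>R axis j 1) t) \<le> Lb * \<bar>d - 0\<bar>"
  proof (rule norm_diff_le_of_vector_derivative_bound[of "closed_segment 0 d"])
    fix h assume h: "h \<in> closed_segment 0 d"
    have "((\<lambda>k. F ((p + h *\<^sub>R axis j 1) + k *\<^sub>R axis j 1) t) \<circ> (\<lambda>h'. h' - h)
        has_vector_derivative 1 *\<^sub>R DF j (p + h *\<^sub>R axis j 1) t) (at h)"
      by (rule vector_diff_chain_at) (auto intro!: derivative_eq_intros DF segment[OF h] assms(2))
    moreover have "(\<lambda>k. F ((p + h *\<^sub>R axis j 1) + k *\<^sub>R axis j 1) t) \<circ> (\<lambda>h'. h' - h)
        = (\<lambda>h. F (p + h *\<^sub>R axis j 1) t)"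
      by (auto simp: fun_eq_iff algebra_simps)
    ultimately show "((\<lambda>h. F (p + h *\<^sub>R axis j 1) t) has_vector_derivative DF j (p + h *\<^sub>R axis j 1) t)
        (at h within closed_segment 0 d)"
      by (auto intro: has_vector_derivative_at_within)
    show "norm (DF j (p + h *\<^sub>R axis j 1) t) \<le> Lb"
      using segment[OF h] assms(2) by (rule less_imp_le[OF bound])
  qed auto
  then show ?thesis by simp
qed

lemma C1_bounded_space_Lipschitz:
  fixes F :: "real^'n \<Rightarrow> real \<Rightarrow> real^'n"
  assumes C1: "C1_bounded D t0 Lb F" and "t0 \<le> t" and ball: "ball x r \<subseteq> D" and "x' \<in> ball x r"
  shows "norm (F x' t - F x t) \<le> Lb * (\<Sum>i\<in>UNIV. \<bar>x' $ i - x $ i\<bar>)"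
proof -
  define p where "p S = (\<chi> i. if i \<in> S then x' $ i else x $ i)" for S
  have in_ball: "p S + h *\<^sub>R axis j 1 \<in> D" if "j \<notin> S" "h \<in> closed_segment 0 (x' $ j - x $ j)" for S j h
  proof -
    have "norm (p S + h *\<^sub>R axis j 1 - x) \<le> norm (x' - x)"
    proof (rule norm_le_componentwise_cart)
      fix i
      show "norm ((p S + h *\<^sub>R axis j 1 - x) $ i) \<le> norm ((x' - x) $ i)"
        using that by (cases "i = j") (auto simp: p_def axis_def closed_segment_eq_real_ivl split: if_splits)
    qed
    then show ?thesis using \<open>x' \<in> ball x r\<close> ball by (auto simp: dist_norm norm_minus_commute)
  qed
  have partial: "norm (F (p S) t - F x t) \<le> Lb * (\<Sum>i\<in>S. \<bar>x' $ i - x $ i\<bar>)" for S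
  proof (induction S rule: infinite_finite_induct)
    case empty
    have "p {} = x" by (simp add: p_def vec_eq_iff)
    then show ?case by simp
  next
    case (insert j S)
    have "p (insert j S) = p S + (x' $ j - x $ j) *\<^sub>R axis j 1"
      using insert(2) by (simp add: p_def vec_eq_iff axis_def)
    moreover have "norm (F (p S + (x' $ j - x $ j) *\<^sub>R axis j 1) t - F (p S) t) \<le> Lb * \<bar>x' $ j - x $ j\<bar>"
      by (rule C1_bounded_coordinate_Lipschitz[OF C1 \<open>t0 \<le> t\<close>])
        (use in_ball[OF insert(2)] in auto)
    ultimately show ?case
      using insert norm_triangle_ineq[of "F (p (insert j S)) t - F (p S) t" "F (p S) t - F x t"]
      by (simp add: distrib_left)
  qed simp
  have "p UNIV = x'" by (simp add: p_def vec_eq_iff)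
  with partial[of UNIV] show ?thesis by simp
qed

lemma C1_bounded_local_Lipschitz:
  fixes F :: "real^'n \<Rightarrow> real \<Rightarrow> real^'n"
  assumes C1: "C1_bounded D t0 Lb F" and "ball x r \<subseteq> D" "x' \<in> ball x r" "t0 \<le> t" "t0 \<le> t'"
  shows "norm (F x' t' - F x t) \<le> Lb * (real CARD('n) * norm (x' - x) + \<bar>t' - t\<bar>)"
proof -
  have "0 < Lb" using C1_bounded_pos[OF C1] assms(2,3) by auto
  have "\<bar>x' $ i - x $ i\<bar> \<le> norm (x' - x)" for i
    using component_le_norm_cart[of "x' - x" i] by simp
  then have "(\<Sum>i\<in>UNIV. \<bar>x' $ i - x $ i\<bar>) \<le> real CARD('n) * norm (x' - x)"
    using sum_bounded_above[of UNIV "\<lambda>i. \<bar>x' $ i - x $ i\<bar>"] by simp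
  then have "norm (F x' t - F x t) \<le> Lb * (real CARD('n) * norm (x' - x))"
    using C1_bounded_space_Lipschitz[OF assms(1,4,2,3)] \<open>0 < Lb\<close>
    by (meson mult_left_mono less_imp_le order_trans)
  moreover have "norm (F x' t' - F x' t) \<le> Lb * \<bar>t' - t\<bar>"
    using assms by (intro C1_bounded_time_Lipschitz[OF C1]) auto
  ultimately show ?thesis
    using norm_triangle_ineq[of "F x' t' - F x' t" "F x' t - F x t"] by (simp add: distrib_left)
qed

lemma continuous_on_C1_bounded_along:
  fixes F :: "real^'n \<Rightarrow> real \<Rightarrow> real^'n" and y :: "real \<Rightarrow> real^'n"
  assumes C1: "C1_bounded D t0 Lb F"
    and "open D" "continuous_on S y" "y ` S \<subseteq> D" "S \<subseteq> {t0..}"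
  shows "continuous_on S (\<lambda>s. F (y s) s)"
  unfolding continuous_on_def
proof
  fix s assume "s \<in> S"
  then obtain r where "r > 0" and ball: "ball (y s) r \<subseteq> D"
    using assms(2,4) open_contains_ball by blast
  have y_lim: "(y \<longlongrightarrow> y s) (at s within S)"
    using assms(3) \<open>s \<in> S\<close> by (simp add: continuous_on_def)
  have "eventually (\<lambda>s'. y s' \<in> ball (y s) r) (at s within S)"
    using topological_tendstoD[OF y_lim open_ball, of "y s" r] \<open>r > 0\<close> by simp
  moreover have "eventually (\<lambda>s'. s' \<in> S) (at s within S)"
    by (simp add: eventually_at_filter)
  ultimately have "eventually (\<lambda>s'. norm (F (y s') s' - F (y s) s)
      \<le> Lb * (real CARD('n) * norm (y s' - y s) + \<bar>s' - s\<bar>)) (at s within S)"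
  proof eventually_elim
    case (elim s')
    then show ?case
      using \<open>s \<in> S\<close> assms(5) by (intro C1_bounded_local_Lipschitz[OF C1 ball]) auto
  qed
  moreover have "((\<lambda>s'. Lb * (real CARD('n) * norm (y s' - y s) + \<bar>s' - s\<bar>)) \<longlongrightarrow>
      Lb * (real CARD('n) * norm (y s - y s) + \<bar>s - s\<bar>)) (at s within S)"
    by (intro tendsto_intros y_lim)
  then have "((\<lambda>s'. Lb * (real CARD('n) * norm (y s' - y s) + \<bar>s' - s\<bar>)) \<longlongrightarrow> 0) (at s within S)"
    by simp
  ultimately have "((\<lambda>s'. F (y s') s' - F (y s) s) \<longlongrightarrow> 0) (at s within S)"
    by (rule Lim_null_comparison)
  then show "((\<lambda>s. F (y s) s) \<longlongrightarrow> F (y s) s) (at s within S)"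
    by (simp add: Lim_null[symmetric])
qed

lemma C1_bounded_local_increment_along_curve:
  fixes F :: "real^'n \<Rightarrow> real \<Rightarrow> real^'n" and y v :: "real \<Rightarrow> real^'n"
  assumes C1: "C1_bounded D t0 Lb F" and "open D" "t0 \<le> a"
    and y: "continuous_on {a..b} y" "y ` {a..b} \<subseteq> D" and v: "continuous_on {a..b} v"
    and curve: "\<And>t. t \<in> {a..b} \<Longrightarrow> (v has_integral y t - y a) {a..t}"
    and s: "s \<in> {a..<b}"
  obtains \<delta> where "\<delta> > 0" "\<And>s'. s' \<in> {s..b} \<Longrightarrow> s' - s < \<delta> \<Longrightarrow>
    norm (F (y s') s' - F (y s) s) \<le> Lb * (real CARD('n) * integral {s..s'} (\<lambda>s. norm (v s)) + (s' - s))"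
proof -
  have "s \<in> {a..b}" using s by auto
  then obtain r where "r > 0" and ball: "ball (y s) r \<subseteq> D"
    using assms(2) y(2) open_contains_ball by blast
  then have "0 < Lb" using C1_bounded_pos[OF C1, of "y s"] centre_in_ball by blast
  obtain \<delta> where "\<delta> > 0" and \<delta>: "\<forall>s'\<in>{a..b}. dist s' s < \<delta> \<longrightarrow> dist (y s') (y s) < r"
    using y(1) \<open>s \<in> {a..b}\<close> \<open>r > 0\<close> unfolding continuous_on_iff by blast
  show ?thesis
  proof (rule that[OF \<open>\<delta> > 0\<close>])
    fix s' assume s': "s' \<in> {s..b}" "s' - s < \<delta>"
    have "dist (y s') (y s) < r"
      using \<delta> s s' by (auto simp: dist_real_def)
    then have "y s' \<in> ball (y s) r" by (simp add: dist_commute)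
    then have "norm (F (y s') s' - F (y s) s) \<le> Lb * (real CARD('n) * norm (y s' - y s) + \<bar>s' - s\<bar>)"
      using s s' assms(3) by (intro C1_bounded_local_Lipschitz[OF C1 ball]) auto
    also have "\<dots> \<le> Lb * (real CARD('n) * integral {s..s'} (\<lambda>s. norm (v s)) + (s' - s))"
      using norm_increment_le_integral_norm[OF curve v, of s s'] \<open>0 < Lb\<close> s s'
      by (intro mult_left_mono add_mono) auto
    finally show "norm (F (y s') s' - F (y s) s)
        \<le> Lb * (real CARD('n) * integral {s..s'} (\<lambda>s. norm (v s)) + (s' - s))" .
  qed
qed

lemma C1_bounded_along_integral_curve:
  fixes F :: "real^'n \<Rightarrow> real \<Rightarrow> real^'n" and y v :: "real \<Rightarrow> real^'n"
  assumes C1: "C1_bounded D t0 Lb F" and "open D" "t0 \<le> a" "a \<le> b"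
    and y: "continuous_on {a..b} y" "y ` {a..b} \<subseteq> D" and v: "continuous_on {a..b} v"
    and curve: "\<And>t. t \<in> {a..b} \<Longrightarrow> (v has_integral y t - y a) {a..t}"
  shows "norm (F (y b) b - F (y a) a)
    \<le> Lb * (real CARD('n) * integral {a..b} (\<lambda>s. norm (v s)) + (b - a))"
proof -
  define G where "G s = Lb * (real CARD('n) * integral {a..s} (\<lambda>s. norm (v s)) + s)" for s
  have norm_v: "(\<lambda>s. norm (v s)) integrable_on {c..d}" if "{c..d} \<subseteq> {a..b}" for c d
    using continuous_on_subset[OF v that] by (intro integrable_continuous_interval continuous_intros)
  have G_increment: "G s' - G s = Lb * (real CARD('n) * integral {s..s'} (\<lambda>s. norm (v s)) + (s' - s))"
    if "a \<le> s" "s \<le> s'" "s' \<le> b" for s s'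
  proof -
    have "integral {a..s'} (\<lambda>s. norm (v s))
        = integral {a..s} (\<lambda>s. norm (v s)) + integral {s..s'} (\<lambda>s. norm (v s))"
      using that by (intro Henstock_Kurzweil_Integration.integral_combine[symmetric] norm_v) auto
    then show ?thesis by (simp add: G_def algebra_simps)
  qed
  have "norm (F (y b) b - F (y a) a) \<le> G b - G a"
  proof (rule norm_diff_le_of_local_increment_bound[OF \<open>a \<le> b\<close>])
    show "continuous_on {a..b} (\<lambda>s. F (y s) s)"
      using assms by (intro continuous_on_C1_bounded_along[OF C1]) auto
    show "continuous_on {a..b} G"
      unfolding G_def by (intro continuous_intros indefinite_integral_continuous_1 norm_v) auto
    fix s assume s: "s \<in> {a..<b}"
    then obtain \<delta> where "\<delta> > 0" and \<delta>: "\<And>s'. s' \<in> {s..b} \<Longrightarrow> s' - s < \<delta> \<Longrightarrow>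
        norm (F (y s') s' - F (y s) s) \<le> Lb * (real CARD('n) * integral {s..s'} (\<lambda>s. norm (v s)) + (s' - s))"
      using C1_bounded_local_increment_along_curve[OF C1 assms(2,3) y v curve] by blast
    then show "\<exists>\<delta>>0. \<forall>s'\<in>{s..b}. s' - s < \<delta> \<longrightarrow> norm (F (y s') s' - F (y s) s) \<le> G s' - G s"
      using s G_increment by (intro exI[of _ \<delta>]) auto
  qed
  then show ?thesis by (simp add: G_def algebra_simps)
qed

lemma vector_derivative_add_scaleR_cases:
  fixes f g :: "real \<Rightarrow> 'a::real_normed_vector"
  assumes sum: "((\<lambda>h. f h + c *\<^sub>R g h) has_vector_derivative d) (at x)" and "c \<noteq> 0"
  shows "vector_derivative f (at x) + c *\<^sub>R vector_derivative g (at x) = d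
    \<or> vector_derivative f (at x) = (SOME d. False) \<and> vector_derivative g (at x) = (SOME d. False)"
proof (cases "f differentiable at x")
  case True
  note scale = bounded_linear.has_vector_derivative[OF bounded_linear_scaleR_right]
  have f: "(f has_vector_derivative vector_derivative f (at x)) (at x)"
    using True by (simp add: vector_derivative_works)
  have "((\<lambda>h. (1/c) *\<^sub>R ((f h + c *\<^sub>R g h) - f h)) has_vector_derivative
      (1/c) *\<^sub>R (d - vector_derivative f (at x))) (at x)"
    by (intro scale has_vector_derivative_diff sum f)
  then have "g differentiable at x"
    using \<open>c \<noteq> 0\<close> by (auto intro: differentiableI_vector)
  then have "((\<lambda>h. f h + c *\<^sub>R g h) has_vector_derivative
      vector_derivative f (at x) + c *\<^sub>R vector_derivative g (at x)) (at x)"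
    by (intro has_vector_derivative_add scale f) (simp add: vector_derivative_works)
  then show ?thesis
    using sum vector_derivative_unique_at by blast
next
  case False
  have "\<not> g differentiable at x"
  proof
    assume "g differentiable at x"
    then have "((\<lambda>h. (f h + c *\<^sub>R g h) - c *\<^sub>R g h) has_vector_derivative
        d - c *\<^sub>R vector_derivative g (at x)) (at x)"
      by (intro has_vector_derivative_diff sum bounded_linear.has_vector_derivative[OF bounded_linear_scaleR_right])
        (simp add: vector_derivative_works)
    with False show False by (auto intro: differentiableI_vector)
  qed
  have junk: "vector_derivative h (at x) = (SOME d. False)" if "\<not> h differentiable at x"
    for h :: "real \<Rightarrow> 'a"
  proof -
    have "(\<lambda>d. (h has_vector_derivative d) (at x)) = (\<lambda>d. False)"
      using that by (auto intro: differentiableI_vector)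
    then show ?thesis by (simp add: vector_derivative_def)
  qed
  show ?thesis using junk False \<open>\<not> g differentiable at x\<close> by simp
qed

lemma norm_mult_vec_le_columns:
  fixes A :: "real^'n^'m"
  assumes "\<And>j. norm (column j A) \<le> c"
  shows "norm (A *v x) \<le> real CARD('n) * c * norm x"
proof -
  have "norm (A *v x) = norm (\<Sum>j\<in>UNIV. x $ j *\<^sub>R column j A)"
    by (simp add: matrix_mult_sum scalar_mult_eq_scaleR)
  also have "\<dots> \<le> (\<Sum>j\<in>UNIV. \<bar>x $ j\<bar> * norm (column j A))"
    by (rule order_trans[OF norm_sum]) simp
  also have "\<dots> \<le> (\<Sum>j\<in>(UNIV::'n set). norm x * c)"
    using assms component_le_norm_cart by (intro sum_mono mult_mono) auto
  finally show ?thesis by (simp add: mult_ac)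
qed

(* Column j of M_u is pdx u j + c pdx (lap u) j, the partial derivative of A_u = u + c lap u,
   unless these partials do not exist; then both are the junk value SOME d. False. *)
lemma column_M_u_bound:
  fixes u :: "real^'n \<Rightarrow> real \<Rightarrow> real^'n"
  assumes "C1_bounded D t0 Lb (A_u \<mu> \<gamma> u)" "x \<in> D" "t0 \<le> t" "\<mu> > 0" "\<gamma> > 0"
  shows "norm (column j (M_u \<mu> \<gamma> u x t)) \<le> max Lb ((1 + \<gamma>/6/\<mu>) * norm (SOME d::real^'n. False))"
proof -
  obtain DF where DF: "((\<lambda>h. A_u \<mu> \<gamma> u (x + h *\<^sub>R axis j 1) t) has_vector_derivative DF) (at 0)"
    and "norm DF < Lb"
    using assms(1-3) unfolding C1_bounded_def by blast
  have "column j (M_u \<mu> \<gamma> u x t) = vector_derivative (\<lambda>h. u (x + h *\<^sub>R axis j 1) t) (at 0)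
      + (\<gamma>/6/\<mu>) *\<^sub>R vector_derivative (\<lambda>h. lap u (x + h *\<^sub>R axis j 1) t) (at 0)"
    by (simp add: vec_eq_iff column_def M_u_def jac_def pdx_def)
  moreover have "vector_derivative (\<lambda>h. u (x + h *\<^sub>R axis j 1) t) (at 0)
      + (\<gamma>/6/\<mu>) *\<^sub>R vector_derivative (\<lambda>h. lap u (x + h *\<^sub>R axis j 1) t) (at 0) = DF
    \<or> vector_derivative (\<lambda>h. u (x + h *\<^sub>R axis j 1) t) (at 0) = (SOME d. False)
      \<and> vector_derivative (\<lambda>h. lap u (x + h *\<^sub>R axis j 1) t) (at 0) = (SOME d. False)"
    using DF assms(4,5) by (intro vector_derivative_add_scaleR_cases) (simp_all add: A_u_def)
  moreover have "(SOME d. False) + (\<gamma>/6/\<mu>) *\<^sub>R (SOME d. False) = (1 + \<gamma>/6/\<mu>) *\<^sub>R (SOME d::real^'n. False)"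
    by (simp add: algebra_simps)
  moreover have "norm ((1 + \<gamma>/6/\<mu>) *\<^sub>R (SOME d::real^'n. False)) = (1 + \<gamma>/6/\<mu>) * norm (SOME d::real^'n. False)"
    using assms(4,5) by simp
  ultimately show ?thesis
    using \<open>norm DF < Lb\<close> by auto
qed

lemma M_u_bounded:
  fixes u :: "real^'n \<Rightarrow> real \<Rightarrow> real^'n"
  assumes "C1_bounded D t0 Lb (A_u \<mu> \<gamma> u)" "\<mu> > 0" "\<gamma> > 0"
  obtains K where "0 \<le> K" "\<And>x t v. x \<in> D \<Longrightarrow> t0 \<le> t \<Longrightarrow> norm (M_u \<mu> \<gamma> u x t *v v) \<le> K * norm v"
proof
  let ?c = "max Lb ((1 + \<gamma>/6/\<mu>) * norm (SOME d::real^'n. False))"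
  have "0 \<le> (1 + \<gamma>/6/\<mu>) * norm (SOME d::real^'n. False)"
    using assms(2,3) by simp
  then show "0 \<le> real CARD('n) * ?c"
    by simp
  show "norm (M_u \<mu> \<gamma> u x t *v v) \<le> real CARD('n) * ?c * norm v" if "x \<in> D" "t0 \<le> t" for x t v
    using assms that by (intro norm_mult_vec_le_columns column_M_u_bound)
qed

section \<open>A priori bounds for solutions\<close>

locale Maxey_Riley_solution =
  fixes D :: "(real^'n) set"
    and u :: "real^'n \<Rightarrow> real \<Rightarrow> real^'n"
    and g y0 w0 :: "real^'n"
    and R \<mu> \<kappa> \<gamma> t0 T Lb :: real
    and y w :: "real \<Rightarrow> real^'n"
  assumes open_D: "open D"
    and \<mu>_pos: "\<mu> > 0" and \<kappa>_nonneg: "\<kappa> \<ge> 0" and \<gamma>_pos: "\<gamma> > 0"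
    and starA: "C1_bounded D t0 Lb (A_u \<mu> \<gamma> u)"
    and starB: "C1_bounded D t0 Lb (B_u R \<mu> \<gamma> g u)"
    and T: "t0 < T"
    and y_cont: "continuous_on {t0..<T} y"
    and w_cont: "continuous_on {t0..<T} w"
    and y_in_D: "y ` {t0..<T} \<subseteq> D"
    and y_eq: "\<forall>t\<in>{t0..<T}.
         ((\<lambda>s. w s + A_u \<mu> \<gamma> u (y s) s) has_integral (y t - y0)) {t0..t}"
    and w_eq: "\<forall>t\<in>{t0..<T}.
         ((\<lambda>s. - (\<mu> *\<^sub>R w s) - (M_u \<mu> \<gamma> u (y s) s *v w s)
                - ((\<kappa> * sqrt \<mu>) / sqrt (t - s)) *\<^sub>R w s
                + B_u R \<mu> \<gamma> g u (y s) s) has_integral (w t - w0)) {t0..t}"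
begin

definition A_along :: "real \<Rightarrow> real^'n" where
  "A_along s = A_u \<mu> \<gamma> u (y s) s"

definition B_along :: "real \<Rightarrow> real^'n" where
  "B_along s = B_u R \<mu> \<gamma> g u (y s) s"

definition w_integrand :: "real \<Rightarrow> real \<Rightarrow> real^'n" where
  "w_integrand t = (\<lambda>s. - (\<mu> *\<^sub>R w s) - (M_u \<mu> \<gamma> u (y s) s *v w s)
     - ((\<kappa> * sqrt \<mu>) / sqrt (t - s)) *\<^sub>R w s + B_along s)"

definition K :: real where
  "K = (SOME K. 0 \<le> K \<and> (\<forall>x\<in>D. \<forall>t\<ge>t0. \<forall>v. norm (M_u \<mu> \<gamma> u x t *v v) \<le> K * norm v))"

lemma K_nonneg: "0 \<le> K"
  and M_mult_le: "x \<in> D \<Longrightarrow> t0 \<le> t \<Longrightarrow> norm (M_u \<mu> \<gamma> u x t *v v) \<le> K * norm v"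
proof -
  obtain K' where "0 \<le> K' \<and> (\<forall>x\<in>D. \<forall>t\<ge>t0. \<forall>v. norm (M_u \<mu> \<gamma> u x t *v v) \<le> K' * norm v)"
    using M_u_bounded[OF starA \<mu>_pos \<gamma>_pos] by metis
  then have "0 \<le> K \<and> (\<forall>x\<in>D. \<forall>t\<ge>t0. \<forall>v. norm (M_u \<mu> \<gamma> u x t *v v) \<le> K * norm v)"
    unfolding K_def by (rule someI)
  then show "0 \<le> K" "x \<in> D \<Longrightarrow> t0 \<le> t \<Longrightarrow> norm (M_u \<mu> \<gamma> u x t *v v) \<le> K * norm v"
    by auto
qed

lemma initial_values: "y t0 = y0" "w t0 = w0"
proof -
  have t0: "t0 \<in> {t0..<T}" using T by simp
  have "((\<lambda>s. w s + A_along s) has_integral y t0 - y0) {t0}"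
    using y_eq[rule_format, OF t0] by (simp add: A_along_def)
  then have "y t0 - y0 = 0" by (rule has_integral_unique[OF _ has_integral_refl(2)])
  then show "y t0 = y0" by simp
  have "(w_integrand t0 has_integral w t0 - w0) {t0}"
    using w_eq[rule_format, OF t0] by (simp add: w_integrand_def B_along_def)
  then have "w t0 - w0 = 0" by (rule has_integral_unique[OF _ has_integral_refl(2)])
  then show "w t0 = w0" by simp
qed

lemma y_curve: "t \<in> {t0..<T} \<Longrightarrow> ((\<lambda>s. w s + A_along s) has_integral y t - y t0) {t0..t}"
  using y_eq by (simp add: A_along_def initial_values)

lemma w_Volterra: "t \<in> {t0..<T} \<Longrightarrow> (w_integrand t has_integral w t - w t0) {t0..t}"
  using w_eq by (simp add: w_integrand_def B_along_def initial_values)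

lemma continuous_A_along: "continuous_on {t0..<T} A_along"
  and continuous_B_along: "continuous_on {t0..<T} B_along"
  unfolding A_along_def B_along_def
  using y_cont y_in_D
  by (auto intro!: continuous_on_C1_bounded_along[OF starA open_D] continuous_on_C1_bounded_along[OF starB open_D])

lemma Lb_pos: "0 < Lb"
proof -
  have "t0 \<in> {t0..<T}" using T by simp
  then have "y t0 \<in> D" using y_in_D by blast
  then show ?thesis by (rule C1_bounded_pos[OF starA])
qed

lemma w_integrand_bound:
  assumes "t \<in> {t0..<T}" "s \<in> {t0..t}"
  shows "norm (w_integrand t s) \<le> (\<mu> + K + \<kappa> * sqrt \<mu> / sqrt (t - s)) * norm (w s) + norm (B_along s)"
proof -
  have triangle: "norm (- a - b - c + d) \<le> norm a + norm b + norm c + norm d" for a b c d :: "real^'n"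
    using norm_triangle_ineq4[of "- a - b" c] norm_triangle_ineq4[of "- a" b]
      norm_triangle_ineq[of "- a - b - c" d] by simp
  have "y s \<in> D" "t0 \<le> s" using assms y_in_D by auto
  then have M: "norm (M_u \<mu> \<gamma> u (y s) s *v w s) \<le> K * norm (w s)" by (rule M_mult_le)
  have "0 \<le> \<kappa> * sqrt \<mu> / sqrt (t - s)" using \<kappa>_nonneg \<mu>_pos assms(2) by simp
  then have memory: "norm ((\<kappa> * sqrt \<mu> / sqrt (t - s)) *\<^sub>R w s) = \<kappa> * sqrt \<mu> / sqrt (t - s) * norm (w s)"
    by (simp only: norm_scaleR abs_of_nonneg)
  have drag: "norm (\<mu> *\<^sub>R w s) = \<mu> * norm (w s)" using \<mu>_pos by simp
  have "norm (w_integrand t s) \<le> norm (\<mu> *\<^sub>R w s) + norm (M_u \<mu> \<gamma> u (y s) s *v w s)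
      + norm ((\<kappa> * sqrt \<mu> / sqrt (t - s)) *\<^sub>R w s) + norm (B_along s)"
    unfolding w_integrand_def by (rule triangle)
  also have "\<dots> \<le> \<mu> * norm (w s) + K * norm (w s)
      + \<kappa> * sqrt \<mu> / sqrt (t - s) * norm (w s) + norm (B_along s)"
    using M unfolding memory drag by linarith
  finally show ?thesis by (simp add: algebra_simps)
qed

definition state_norm :: "real \<Rightarrow> real" where
  "state_norm s = norm (w s) + norm (A_along s) + norm (B_along s)"

lemma continuous_state_norm: "continuous_on {t0..<T} state_norm"
  unfolding state_norm_def by (intro continuous_intros w_cont continuous_A_along continuous_B_along)

lemma growth_along_solution:
  fixes F :: "real^'n \<Rightarrow> real \<Rightarrow> real^'n"
  assumes F: "C1_bounded D t0 Lb F" and t: "t \<in> {t0..<T}"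
  shows "norm (F (y t) t) \<le> norm (F (y t0) t0)
    + Lb * (real CARD('n) * integral {t0..t} (\<lambda>s. norm (w s + A_along s)) + (t - t0))"
proof -
  have sub: "{t0..t} \<subseteq> {t0..<T}" using t by auto
  have "norm (F (y t) t - F (y t0) t0)
      \<le> Lb * (real CARD('n) * integral {t0..t} (\<lambda>s. norm (w s + A_along s)) + (t - t0))"
  proof (rule C1_bounded_along_integral_curve[OF F open_D order_refl])
    show "continuous_on {t0..t} y" by (rule continuous_on_subset[OF y_cont sub])
    show "continuous_on {t0..t} (\<lambda>s. w s + A_along s)"
      by (rule continuous_on_subset[OF _ sub]) (intro continuous_on_add w_cont continuous_A_along)
    show "((\<lambda>s. w s + A_along s) has_integral y s - y t0) {t0..s}" if "s \<in> {t0..t}" for s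
      using that sub by (intro y_curve) auto
  qed (use t y_in_D sub in auto)
  then show ?thesis
    using norm_triangle_ineq2[of "F (y t) t" "F (y t0) t0"] by linarith
qed

lemma integral_norm_velocity_le:
  assumes t: "t \<in> {t0..<T}" and "\<tau> \<in> {t0..t}" "0 \<le> m1" "0 \<le> m2"
    and m1: "\<forall>s\<in>{t0..\<tau>}. state_norm s \<le> m1" and m2: "\<forall>s\<in>{t0..t}. state_norm s \<le> m2"
  shows "integral {t0..t} (\<lambda>s. norm (w s + A_along s)) \<le> m1 * (\<tau> - t0) + m2 * (t - \<tau>)"
proof -
  have le_state: "norm (norm (w s + A_along s)) \<le> state_norm s" for s
  proof -
    have "norm (w s + A_along s) \<le> norm (w s) + norm (A_along s) + norm (B_along s)"
      using norm_triangle_ineq[of "w s" "A_along s"] norm_ge_zero[of "B_along s"] by linarith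
    then show ?thesis by (simp add: state_norm_def)
  qed
  have "{t0..t} \<subseteq> {t0..<T}" using t by auto
  then have "continuous_on {t0..t} (\<lambda>s. norm (w s + A_along s))"
    by (rule continuous_on_subset[rotated]) (intro continuous_intros w_cont continuous_A_along)
  then have "norm (integral {t0..t} (\<lambda>s. norm (w s + A_along s)))
      \<le> m1 * (1 * (\<tau> - t0) + 2 * 0 * sqrt (t - t0)) + m2 * (1 * (t - \<tau>) + 2 * 0 * sqrt (t - \<tau>))"
  proof (rule norm_integral_le_weakly_singular_split[OF integrable_continuous_interval])
    fix s
    show "norm (norm (w s + A_along s)) \<le> m1 * (1 + 0 / sqrt (t - s))" if "s \<in> {t0..\<tau>}"
      using order_trans[OF le_state, of s m1] m1 that by simp
    show "norm (norm (w s + A_along s)) \<le> m2 * (1 + 0 / sqrt (t - s))" if "s \<in> {\<tau>..t}"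
      using order_trans[OF le_state, of s m2] m2 that assms(2) by simp
  qed (use assms(2-4) in auto)
  then show ?thesis by (simp add: abs_le_iff)
qed

lemma norm_w_le:
  assumes t: "t \<in> {t0..<T}" and "\<tau> \<in> {t0..t}" "0 \<le> m1" "0 \<le> m2"
    and m1: "\<forall>s\<in>{t0..\<tau>}. state_norm s \<le> m1" and m2: "\<forall>s\<in>{t0..t}. state_norm s \<le> m2"
  shows "norm (w t) \<le> norm (w t0)
    + m1 * ((\<mu> + K + 1) * (T - t0) + 2 * (\<kappa> * sqrt \<mu>) * sqrt (T - t0))
    + m2 * ((\<mu> + K + 1) * (t - \<tau>) + 2 * (\<kappa> * sqrt \<mu>) * sqrt (t - \<tau>))"
proof -
  define q where "q s = \<mu> + K + 1 + \<kappa> * sqrt \<mu> / sqrt (t - s)" for s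
  have bound: "norm (w_integrand t s) \<le> m * q s"
    if s: "s \<in> {t0..t}" and "state_norm s \<le> m" for s m
  proof -
    have "0 \<le> \<kappa> * sqrt \<mu> / sqrt (t - s)" using s \<mu>_pos \<kappa>_nonneg by simp
    then have "1 \<le> q s" "0 \<le> q s" using \<mu>_pos K_nonneg by (simp_all add: q_def)
    then have "(\<mu> + K + \<kappa> * sqrt \<mu> / sqrt (t - s)) * norm (w s) \<le> q s * norm (w s)"
      and "norm (B_along s) \<le> q s * norm (B_along s)"
      and "0 \<le> q s * norm (A_along s)"
      by (simp_all add: q_def mult_right_mono mult_le_cancel_right1)
    then have "norm (w_integrand t s) \<le> q s * state_norm s"
      using w_integrand_bound[OF t s] by (simp add: state_norm_def distrib_left)
    also have "\<dots> \<le> q s * m"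
      using \<open>0 \<le> q s\<close> \<open>state_norm s \<le> m\<close> by (rule mult_left_mono[rotated])
    finally show ?thesis by (simp add: mult.commute)
  qed
  have "norm (integral {t0..t} (w_integrand t))
      \<le> m1 * ((\<mu> + K + 1) * (\<tau> - t0) + 2 * (\<kappa> * sqrt \<mu>) * sqrt (t - t0))
      + m2 * ((\<mu> + K + 1) * (t - \<tau>) + 2 * (\<kappa> * sqrt \<mu>) * sqrt (t - \<tau>))"
  proof (rule norm_integral_le_weakly_singular_split)
    show "w_integrand t integrable_on {t0..t}" using w_Volterra[OF t] by blast
    fix s
    show "norm (w_integrand t s) \<le> m1 * (\<mu> + K + 1 + \<kappa> * sqrt \<mu> / sqrt (t - s))" if "s \<in> {t0..\<tau>}"
      using bound[of s m1] m1 that assms(2) by (simp add: q_def)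
    show "norm (w_integrand t s) \<le> m2 * (\<mu> + K + 1 + \<kappa> * sqrt \<mu> / sqrt (t - s))" if "s \<in> {\<tau>..t}"
      using bound[of s m2] m2 that assms(2) by (simp add: q_def)
  qed (use assms(2-4) \<kappa>_nonneg \<mu>_pos in auto)
  also have "\<dots> \<le> m1 * ((\<mu> + K + 1) * (T - t0) + 2 * (\<kappa> * sqrt \<mu>) * sqrt (T - t0))
      + m2 * ((\<mu> + K + 1) * (t - \<tau>) + 2 * (\<kappa> * sqrt \<mu>) * sqrt (t - \<tau>))"
    using assms(2-4) t \<mu>_pos \<kappa>_nonneg K_nonneg
    by (intro add_right_mono mult_left_mono add_mono mult_right_mono) auto
  finally show ?thesis
    using integral_unique[OF w_Volterra[OF t]] norm_triangle_ineq[of "w t0" "w t - w t0"] by simp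
qed

lemma state_norm_estimate:
  assumes t: "t \<in> {t0..<T}" and "\<tau> \<in> {t0..t}" "0 \<le> m1" "0 \<le> m2"
    and "\<forall>s\<in>{t0..\<tau>}. state_norm s \<le> m1" "\<forall>s\<in>{t0..t}. state_norm s \<le> m2"
  shows "state_norm t \<le> (state_norm t0 + 2 * Lb * (T - t0))
    + ((\<mu> + K + 1) * (T - t0) + 2 * (\<kappa> * sqrt \<mu>) * sqrt (T - t0) + 2 * Lb * real CARD('n) * (T - t0)) * m1
    + ((\<mu> + K + 1 + 2 * Lb * real CARD('n)) * (t - \<tau>) + 2 * (\<kappa> * sqrt \<mu>) * sqrt (t - \<tau>)) * m2"
proof -
  let ?I = "integral {t0..t} (\<lambda>s. norm (w s + A_along s))"
  have "m1 * (\<tau> - t0) \<le> m1 * (T - t0)"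
    using assms(2,3) t by (intro mult_left_mono) auto
  then have "Lb * real CARD('n) * ?I \<le> Lb * real CARD('n) * (m1 * (T - t0) + m2 * (t - \<tau>))"
    using integral_norm_velocity_le[OF assms] Lb_pos by (intro mult_left_mono) auto
  moreover have "Lb * (t - t0) \<le> Lb * (T - t0)"
    using t Lb_pos by (intro mult_left_mono) auto
  moreover have "norm (A_along t) \<le> norm (A_along t0) + Lb * (real CARD('n) * ?I + (t - t0))"
    and "norm (B_along t) \<le> norm (B_along t0) + Lb * (real CARD('n) * ?I + (t - t0))"
    using growth_along_solution[OF starA t] growth_along_solution[OF starB t]
    by (simp_all add: A_along_def B_along_def)
  ultimately show ?thesis
    using norm_w_le[OF assms] unfolding state_norm_def by (simp add: algebra_simps)
qed

lemma state_norm_bounded: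
  obtains Z where "0 < Z" "\<And>s. s \<in> {t0..<T} \<Longrightarrow> state_norm s \<le> Z"
proof -
  obtain Z where "\<And>s. s \<in> {t0..<T} \<Longrightarrow> state_norm s \<le> Z"
  proof (rule bounded_of_short_step_bootstrap[OF continuous_state_norm _ _ state_norm_estimate])
    show "0 \<le> state_norm s" for s by (simp add: state_norm_def)
  qed (use \<mu>_pos \<kappa>_nonneg K_nonneg Lb_pos T in auto)
  then show ?thesis
    using that[of "max Z 1"] by fastforce
qed

lemma memory_integral_Hoelder:
  "\<exists>C>0. \<forall>t1 t2. t0 < t1 \<and> t1 < t2 \<and> t2 < T \<longrightarrow>
     norm (integral {t0..t2} (\<lambda>s. (1 / sqrt (t2 - s)) *\<^sub>R w s)
           - integral {t0..t1} (\<lambda>s. (1 / sqrt (t1 - s)) *\<^sub>R w s))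
       \<le> C * sqrt \<bar>t2 - t1\<bar>"
proof -
  obtain Z where "0 < Z" and Z: "\<And>s. s \<in> {t0..<T} \<Longrightarrow> state_norm s \<le> Z"
    using state_norm_bounded by blast
  have "norm (w s) \<le> Z" if "s \<in> {t0..<T}" for s
    using Z[OF that] norm_ge_zero[of "A_along s"] norm_ge_zero[of "B_along s"]
    unfolding state_norm_def by linarith
  then show ?thesis
    using \<open>0 < Z\<close>
    by (intro exI[of _ "4 * Z"]) (auto intro!: inverse_sqrt_kernel_integral_Hoelder continuous_on_subset[OF w_cont])
qed

lemma w_over_sqrt_tendsto_0:
  assumes "w t0 = 0"
  shows "((\<lambda>t. (1 / sqrt (t - t0)) *\<^sub>R w t) \<longlongrightarrow> 0) (at_right t0)"
proof -
  obtain Z where "0 < Z" and Z: "\<And>s. s \<in> {t0..<T} \<Longrightarrow> state_norm s \<le> Z"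
    using state_norm_bounded by blast
  show ?thesis
  proof (rule Volterra_solution_over_sqrt_tendsto_0[OF w_cont T assms])
    show "(w_integrand t has_integral w t) {t0..t}" if "t \<in> {t0..<T}" for t
      using w_Volterra[OF that] assms by simp
    show "norm (w_integrand t s) \<le> Z + (\<mu> + K + \<kappa> * sqrt \<mu> / sqrt (t - s)) * norm (w s)"
      if "t \<in> {t0..<T}" "s \<in> {t0..t}" for t s
    proof -
      have "state_norm s \<le> Z" using that by (intro Z) auto
      then show ?thesis
        using w_integrand_bound[OF that] norm_ge_zero[of "w s"] norm_ge_zero[of "A_along s"]
        unfolding state_norm_def by linarith
    qed
  qed (use \<open>0 < Z\<close> \<mu>_pos \<kappa>_nonneg K_nonneg in auto)
qed

end

theorem lemma4p1:
  fixes D :: "(real^'n) set"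
    and u :: "real^'n \<Rightarrow> real \<Rightarrow> real^'n"
    and g y0 w0 :: "real^'n"
    and R \<mu> \<kappa> \<gamma> t0 T Lb :: real
    and y w :: "real \<Rightarrow> real^'n"
  assumes D_domain: "open D" "connected D"
    and t0: "t0 \<ge> 0"
    and params: "R > 0" "\<mu> > 0" "\<kappa> > 0" "\<gamma> > 0"
    and starA: "C1_bounded D t0 Lb (A_u \<mu> \<gamma> u)"
    and starB: "C1_bounded D t0 Lb (B_u R \<mu> \<gamma> g u)"
    and T: "t0 < T"
    and y_cont: "continuous_on {t0..<T} y"
    and w_cont: "continuous_on {t0..<T} w"
    and y_in_D: "y ` {t0..<T} \<subseteq> D"
    and y_eq: "\<forall>t\<in>{t0..<T}.
         ((\<lambda>s. w s + A_u \<mu> \<gamma> u (y s) s) has_integral (y t - y0)) {t0..t}"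
    and w_eq: "\<forall>t\<in>{t0..<T}.
         ((\<lambda>s. - (\<mu> *\<^sub>R w s) - (M_u \<mu> \<gamma> u (y s) s *v w s)
                - ((\<kappa> * sqrt \<mu>) / sqrt (t - s)) *\<^sub>R w s
                + B_u R \<mu> \<gamma> g u (y s) s) has_integral (w t - w0)) {t0..t}"
  shows "(\<exists>C>0. \<forall>t1 t2. t0 < t1 \<and> t1 < t2 \<and> t2 < T \<longrightarrow>
            norm (integral {t0..t2} (\<lambda>s. (1 / sqrt (t2 - s)) *\<^sub>R w s)
                  - integral {t0..t1} (\<lambda>s. (1 / sqrt (t1 - s)) *\<^sub>R w s))
              \<le> C * sqrt \<bar>t2 - t1\<bar>)
         \<and> (w t0 = 0 \<longrightarrow> ((\<lambda>t. (1 / sqrt (t - t0)) *\<^sub>R w t) \<longlongrightarrow> 0) (at_right t0))"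
proof -
  interpret Maxey_Riley_solution D u g y0 w0 R \<mu> \<kappa> \<gamma> t0 T Lb y w
    by unfold_locales (use assms in auto)
  show ?thesis
    using memory_integral_Hoelder w_over_sqrt_tendsto_0 by blast
qed

end
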